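(* Let ${\bm k}$ be a field of characteristic different from $2$, and let $X_1,\dots,X_n\in\hat{A}_{n,{\bm k}}$ be given by $$X_i = x_i + \sum_{l = 1}^n x_l\sum_{N = 1}^\infty \sum_{j = 1}^n p^{N-1,l}_{ij}(\partial^1,\ldots,\partial^n)\,\partial^j,$$ where each $p^{N-1,l}_{ij}$ is a homogeneous polynomial of degree $N-1$ in $\partial^1,\ldots,\partial^n$ with $p^{N-1,l}_{ij}=-p^{N-1,l}_{ji}$. Then: (1) there is a well-defined ${\bm k}$-linear map $\tilde{e}:{\bm k}[x_1,\ldots,x_n]\to \hat{A}_{n,{\bm k}}$ given, for all $k\ge 0$ and all (non-strictly) monotone $\alpha:\{1,\ldots,k\}\to\{1,\ldots,n\}$, by $$\tilde{e}(x_{\alpha_1}\cdots x_{\alpha_k}) = \sum_{\sigma\in\Sigma(k)} X_{\alpha_{\sigma(1)}}\cdots X_{\alpha_{\sigma(k)}};$$ (2) $\tilde{e}(P_k)\triangleright 1 = k!\,P_k$ for every polynomial $P_k\in{\bm k}[x_1,\ldots,x_n]$ homogeneous of degree $k$; (3) $\tilde{e}$ is injective if and only if $\operatorname{char}{\bm k}=0$, and in that case the elements $\tilde{e}(x_{\alpha_1}\cdots x_{\alpha_k})$, for $k\ge 0$ and $\alpha$ monotone, are linearly independent; (4) if $\operatorname{char}{\bm k}=0$, the ${\bm k}$-linear map $e:{\bm k}[x_1,\ldots,x_n]\to \hat{A}_{n,{\bm k}}$ defined on monomials of degree $k$ by $$e(x_{\alpha_1}\cdots x_{\alpha_k}) =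 \frac{1}{k!}\sum_{\sigma\in\Sigma(k)} X_{\alpha_{\sigma(1)}}\cdots X_{\alpha_{\sigma(k)}}$$ is injective.
   Context: $\Sigma(k)$ is the symmetric group on $k$ letters, and $\alpha_i=\alpha(i)$. The $n$-th Weyl algebra $A_{n,{\bm k}}$ is the associative ${\bm k}$-algebra generated by $x_1,\ldots,x_n,\partial^1,\ldots,\partial^n$ with relations $[x_i,x_j]=0$, $[\partial^i,\partial^j]=0$, $[\partial^j,x_i]=\delta^j_i$. Its completion $\hat{A}_{n,{\bm k}}$ by the degree of differential operators consists of formal power series in $\partial^1,\ldots,\partial^n$ with left coefficients in ${\bm k}[x_1,\ldots,x_n]$. The Fock action $\triangleright$ on ${\bm k}[x_1,\ldots,x_n]$ lets $x_i$ act by multiplication and $\partial^j$ by $\partial/\partial x_j$; $1$ is the vacuum. *)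

theory Defs
  imports Main "HOL-Combinatorics.Permutations"
begin

(* Variables x_i, \<partial>^i are indexed by a finite linearly ordered type 'n
   (n = CARD('n)).  A multi-index is a function 'n \<Rightarrow> nat.            *)
type_synonym 'n mon = "'n \<Rightarrow> nat"

(* Polynomials in k[x_1..x_n]: coefficient functions on multi-indices
   with finite support.  P a = coefficient of x^a.                       *)
definition is_poly :: "('n mon \<Rightarrow> 'k::zero) \<Rightarrow> bool" where
  "is_poly P \<longleftrightarrow> finite {a. P a \<noteq> 0}"

(* Completed Weyl algebra: normally ordered formal series
   F = \<Sum>_{b} (\<Sum>_a F b a x^a) \<partial>^b, where for each \<partial>-exponent b the
   left coefficient is a polynomial in x (finitely many a).              *)
definition is_weyl :: "('n mon \<Rightarrow> 'n mon \<Rightarrow> 'k::zero) \<Rightarrow> bool" where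
  "is_weyl F \<longleftrightarrow> (\<forall>b. finite {a. F b a \<noteq> 0})"

definition mzero :: "'n mon" where "mzero = (\<lambda>_. 0)"

definition delta :: "'n \<Rightarrow> 'n mon" where "delta i = (\<lambda>j. if j = i then 1 else 0)"

definition mdeg :: "'n::finite mon \<Rightarrow> nat" where "mdeg a = (\<Sum>i\<in>UNIV. a i)"

definition mchoose :: "'n::finite mon \<Rightarrow> 'n mon \<Rightarrow> nat" where
  "mchoose b m = (\<Prod>i\<in>UNIV. b i choose m i)"

definition mfact :: "'n::finite mon \<Rightarrow> nat" where
  "mfact m = (\<Prod>i\<in>UNIV. fact (m i))"

definition wzero :: "'n mon \<Rightarrow> 'n mon \<Rightarrow> 'k::zero" where
  "wzero = (\<lambda>b a. 0)"

definition wone :: "'n mon \<Rightarrow> 'n mon \<Rightarrow> 'k::{zero,one}" where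
  "wone = (\<lambda>b a. if b = mzero \<and> a = mzero then 1 else 0)"

definition wadd :: "('n mon \<Rightarrow> 'n mon \<Rightarrow> 'k::plus) \<Rightarrow> ('n mon \<Rightarrow> 'n mon \<Rightarrow> 'k) \<Rightarrow> ('n mon \<Rightarrow> 'n mon \<Rightarrow> 'k)" where
  "wadd F G = (\<lambda>b a. F b a + G b a)"

definition wscale :: "'k::times \<Rightarrow> ('n mon \<Rightarrow> 'n mon \<Rightarrow> 'k) \<Rightarrow> ('n mon \<Rightarrow> 'n mon \<Rightarrow> 'k)" where
  "wscale c F = (\<lambda>b a. c * F b a)"

definition wsum :: "('s \<Rightarrow> 'n mon \<Rightarrow> 'n mon \<Rightarrow> 'k::comm_monoid_add) \<Rightarrow> 's set \<Rightarrow> ('n mon \<Rightarrow> 'n mon \<Rightarrow> 'k)" where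
  "wsum f S = (\<lambda>b a. \<Sum>s\<in>S. f s b a)"

(* Product in the completed Weyl algebra, from
   (x^a' \<partial>^b)(x^c \<partial>^d) = \<Sum>_{m \<le> b, m \<le> c} C(b,m) C(c,m) m! x^(a'+c-m) \<partial>^(b-m+d),
   where b = b' + m.  All index sets are finite (d \<le> e, b' \<le> e, a' \<le> a,
   c in the support of the polynomial G d, m \<le> c).                    *)
definition wmul :: "('n::finite mon \<Rightarrow> 'n mon \<Rightarrow> 'k::comm_ring_1) \<Rightarrow> ('n mon \<Rightarrow> 'n mon \<Rightarrow> 'k) \<Rightarrow> ('n mon \<Rightarrow> 'n mon \<Rightarrow> 'k)" where
  "wmul F G = (\<lambda>e a.
     \<Sum>d\<in>{d. d \<le> e}. \<Sum>c\<in>{c. G d c \<noteq> 0}. \<Sum>m\<in>{m. m \<le> c}. \<Sum>b'\<in>{b'. b' \<le> e}. \<Sum>a'\<in>{a'. a' \<le> a}.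
       if (\<lambda>i. b' i + d i) = e \<and> (\<lambda>i. a' i + (c i - m i)) = a
       then F (\<lambda>i. b' i + m i) a' * G d c * of_nat (mchoose (\<lambda>i. b' i + m i) m * mchoose c m * mfact m)
       else 0)"

definition wprod :: "('n::finite mon \<Rightarrow> 'n mon \<Rightarrow> 'k::comm_ring_1) list \<Rightarrow> ('n mon \<Rightarrow> 'n mon \<Rightarrow> 'k)" where
  "wprod Fs = foldr wmul Fs wone"

(* The generators
   X_i = x_i + \<Sum>_l x_l \<Sum>_{N\<ge>1} \<Sum>_j p^{N-1,l}_{ij}(\<partial>) \<partial>^j.
   p d l i j m = coefficient of \<partial>^m in p^{d,l}_{ij}.  The coefficient of
   x_l \<partial>^b receives contributions p^{N-1,l}_{ij}(b - e_j) for b_j \<ge> 1; for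
   homogeneous p only N = |b| contributes, so the sum over N may be
   taken over 1..|b| (coefficientwise meaning of the formal series).     *)
definition Xgen :: "(nat \<Rightarrow> 'n \<Rightarrow> 'n \<Rightarrow> 'n \<Rightarrow> 'n mon \<Rightarrow> 'k::comm_ring_1) \<Rightarrow> 'n::finite \<Rightarrow> ('n mon \<Rightarrow> 'n mon \<Rightarrow> 'k)" where
  "Xgen p i = (\<lambda>b a.
     (if b = mzero \<and> a = delta i then 1 else 0)
     + (\<Sum>l\<in>UNIV. if a = delta l
          then (\<Sum>N\<in>{1..mdeg b}. \<Sum>j\<in>UNIV.
                  if 1 \<le> b j then p (N - 1) l i j (\<lambda>t. b t - delta j t) else 0)
          else 0))"

(* monomial x_{\<alpha>_1}...x_{\<alpha>_k} for \<alpha> given as the list [\<alpha>_1,...,\<alpha>_k] *)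
definition mono_of :: "'n list \<Rightarrow> ('n mon \<Rightarrow> 'k::{zero,one})" where
  "mono_of xs = (\<lambda>a. if a = (\<lambda>i. count_list xs i) then 1 else 0)"

(* \<Sum>_{\<sigma>\<in>\<Sigma>(k)} X_{\<alpha>_\<sigma>(1)} ... X_{\<alpha>_\<sigma>(k)}, 0-indexed *)
definition esym :: "('n::finite \<Rightarrow> ('n mon \<Rightarrow> 'n mon \<Rightarrow> 'k::comm_ring_1)) \<Rightarrow> 'n list \<Rightarrow> ('n mon \<Rightarrow> 'n mon \<Rightarrow> 'k)" where
  "esym X xs = wsum (\<lambda>\<sigma>. wprod (map (\<lambda>t. X (xs ! \<sigma> t)) [0..<length xs]))
                    {\<sigma>. \<sigma> permutes {..<length xs}}"

definition lin_map :: "(('n mon \<Rightarrow> 'k::comm_ring_1) \<Rightarrow> ('n mon \<Rightarrow> 'n mon \<Rightarrow> 'k)) \<Rightarrow> bool" where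
  "lin_map E \<longleftrightarrow>
     (\<forall>P Q. is_poly P \<longrightarrow> is_poly Q \<longrightarrow> E (\<lambda>a. P a + Q a) = wadd (E P) (E Q)) \<and>
     (\<forall>c P. is_poly P \<longrightarrow> E (\<lambda>a. c * P a) = wscale c (E P))"

(* Fock action: (x^a \<partial>^b) \<triangleright> x^c = [b \<le> c] C(c,b) b! x^(a + c - b) *)
definition fock :: "('n::finite mon \<Rightarrow> 'n mon \<Rightarrow> 'k::comm_ring_1) \<Rightarrow> ('n mon \<Rightarrow> 'k) \<Rightarrow> ('n mon \<Rightarrow> 'k)" where
  "fock F q = (\<lambda>e. \<Sum>c\<in>{c. q c \<noteq> 0}. \<Sum>b\<in>{b. b \<le> c}. \<Sum>a\<in>{a. a \<le> e}.
      if (\<lambda>i. a i + (c i - b i)) = e then F b a * q c * of_nat (mchoose c b * mfact b) else 0)"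

definition vac :: "'n mon \<Rightarrow> 'k::{zero,one}" where
  "vac = (\<lambda>a. if a = mzero then 1 else 0)"

end

theory Submission
  imports Defs "HOL-Combinatorics.Multiset_Permutations"
begin

text \<open>Since \<open>F \<triangleright> 1\<close> is the \<open>\<partial>\<close>-free part of \<open>F\<close> and \<open>(X F) \<triangleright> 1 = X \<triangleright> (F \<triangleright> 1)\<close>,
  the \<open>\<partial>\<close>-free part of the symmetrised product of \<open>X\<^sub>\<alpha>\<^sub>1, \<dots>, X\<^sub>\<alpha>\<^sub>k\<close> can be computed by
  induction on \<open>k\<close>. The induction step is the Euler identity
  \<open>\<Sum>\<^sub>i X\<^sub>i \<triangleright> \<partial>\<^sub>i x\<^sup>a = |a| x\<^sup>a\<close>: the correction terms
  \<open>\<Sum>\<^sub>l x\<^sub>l \<Sum>\<^sub>i\<^sub>,\<^sub>j p\<^sup>l\<^sub>i\<^sub>j(\<partial>) \<partial>\<^sup>j \<partial>\<^sup>i x\<^sup>a\<close> cancel because \<open>p\<^sup>l\<^sub>i\<^sub>j\<close> is antisymmetric in \<open>i, j\<close>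
  (for the diagonal terms this needs \<open>2 \<noteq> 0\<close>). Hence \<open>etilde p (x\<^sup>a) \<triangleright> 1 = |a|! x\<^sup>a\<close>, which
  gives injectivity and linear independence in characteristic 0, while in characteristic
  \<open>c > 0\<close> the monomial \<open>x\<^sub>i\<^sup>c\<close> is mapped to \<open>c! X\<^sub>i\<^sup>c = 0\<close>.\<close>

lemma finite_mon_le: "finite {d::'n::finite mon. d \<le> e}"
proof (rule finite_subset)
  show "{d::'n mon. d \<le> e} \<subseteq> PiE UNIV (\<lambda>i. {..e i})"
    by (auto simp: le_fun_def PiE_def Pi_def extensional_def)
qed (rule finite_PiE, auto)

lemma mon_le_mzero_iff: "(b::'n mon) \<le> mzero \<longleftrightarrow> b = mzero"
  by (auto simp: le_fun_def mzero_def)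

lemma mchoose_mzero [simp]: "mchoose c mzero = 1"
  by (simp add: mchoose_def mzero_def)

lemma mchoose_self [simp]: "mchoose m m = 1"
  by (simp add: mchoose_def)

lemma mfact_mzero [simp]: "mfact mzero = 1"
  by (simp add: mfact_def mzero_def)

lemma mdeg_count_list: "mdeg (count_list (xs::'n::finite list)) = length xs"
  unfolding mdeg_def by (rule sum_count_set) auto

lemma mon_add_eq_iff: "(\<lambda>i. a' i + d i) = (t::'n mon) \<longleftrightarrow> d \<le> t \<and> a' = (\<lambda>i. t i - d i)"
proof
  assume "(\<lambda>i. a' i + d i) = t"
  then have "\<And>i. a' i + d i = t i" by (auto simp: fun_eq_iff)
  then show "d \<le> t \<and> a' = (\<lambda>i. t i - d i)"
    by (auto simp: le_fun_def fun_eq_iff) (metis le_add2, metis add_diff_cancel_right')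
qed (auto simp: le_fun_def fun_eq_iff)

lemma mon_diff_eq_iff: "d \<le> t \<and> (\<lambda>k. t k - d k) = e \<longleftrightarrow> (t::'n mon) = (\<lambda>k. e k + d k)"
  by (auto simp: le_fun_def fun_eq_iff) (metis le_add_diff_inverse2)

lemma sum_if_conj_eq:
  "finite S \<Longrightarrow> (\<Sum>a\<in>S. if P \<and> a = x then f a else 0) = (if P \<and> x \<in> S then f x else 0)"
  by (cases P) (simp_all add: sum.delta')

subsection \<open>Closure properties of the completed Weyl algebra\<close>

lemma is_weyl_wone: "is_weyl wone"
  unfolding is_weyl_def wone_def by auto

lemma is_weyl_Xgen: "is_weyl (Xgen p i)"
  unfolding is_weyl_def
proof
  fix b
  have "{a. Xgen p i b a \<noteq> 0} \<subseteq> insert (delta i) (range delta)"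
    unfolding Xgen_def by (auto elim!: sum.not_neutral_contains_not_neutral split: if_splits)
  then show "finite {a. Xgen p i b a \<noteq> 0}"
    by (rule finite_subset) auto
qed

lemma is_weyl_wsum: "finite S \<Longrightarrow> (\<And>s. s \<in> S \<Longrightarrow> is_weyl (f s)) \<Longrightarrow> is_weyl (wsum f S)"
  unfolding is_weyl_def wsum_def
proof
  fix b assume "finite S" "\<And>s. s \<in> S \<Longrightarrow> \<forall>b. finite {a. f s b a \<noteq> 0}"
  then have "finite (\<Union>s\<in>S. {a. f s b a \<noteq> 0})" by auto
  moreover have "{a. (\<Sum>s\<in>S. f s b a) \<noteq> 0} \<subseteq> (\<Union>s\<in>S. {a. f s b a \<noteq> 0})"
    by (auto elim!: sum.not_neutral_contains_not_neutral)
  ultimately show "finite {a. (\<Sum>s\<in>S. f s b a) \<noteq> 0}" using finite_subset by blast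
qed

lemma is_weyl_wscale:
  fixes F :: "'n mon \<Rightarrow> 'n mon \<Rightarrow> 'k::mult_zero"
  shows "is_weyl F \<Longrightarrow> is_weyl (wscale c F)"
  unfolding is_weyl_def wscale_def
  by (metis (mono_tags, lifting) mem_Collect_eq mult_zero_right rev_finite_subset subsetI)

lemma is_weyl_wmul:
  fixes F G :: "'n::finite mon \<Rightarrow> 'n mon \<Rightarrow> 'k::comm_ring_1"
  assumes F: "is_weyl F" and G: "is_weyl G"
  shows "is_weyl (wmul F G)"
  unfolding is_weyl_def
proof
  fix e :: "'n mon"
  define T where "T = (\<Union>d\<in>{d. d\<le>e}. \<Union>c\<in>{c. G d c \<noteq> 0}. \<Union>m\<in>{m. m \<le> c}. \<Union>b'\<in>{b'. b' \<le> e}.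
      (\<lambda>a'. \<lambda>i. a' i + (c i - m i)) ` {a'. F (\<lambda>i. b' i + m i) a' \<noteq> 0})"
  have "finite T" unfolding T_def using F G finite_mon_le
    by (auto simp: is_weyl_def intro!: finite_UN_I)
  moreover have "{a. wmul F G e a \<noteq> 0} \<subseteq> T"
  proof
    fix a assume "a \<in> {a. wmul F G e a \<noteq> 0}"
    then obtain d c m b' a' where
      "d \<le> e" "G d c \<noteq> 0" "m \<le> c" "b' \<le> e" "a' \<le> a"
      and "(if (\<lambda>i. b' i + d i) = e \<and> (\<lambda>i. a' i + (c i - m i)) = a
       then F (\<lambda>i. b' i + m i) a' * G d c * of_nat (mchoose (\<lambda>i. b' i + m i) m * mchoose c m * mfact m)
       else 0) \<noteq> 0"
      unfolding wmul_def by (auto elim!: sum.not_neutral_contains_not_neutral)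
    then have "a = (\<lambda>i. a' i + (c i - m i))" "F (\<lambda>i. b' i + m i) a' \<noteq> 0" "d \<le> e" "G d c \<noteq> 0"
      "m \<le> c" "b' \<le> e"
      by (auto split: if_splits)
    then show "a \<in> T" unfolding T_def by blast
  qed
  ultimately show "finite {a. wmul F G e a \<noteq> 0}" using finite_subset by blast
qed

lemma is_weyl_wprod: "(\<And>F. F \<in> set Fs \<Longrightarrow> is_weyl F) \<Longrightarrow> is_weyl (wprod Fs)"
  unfolding wprod_def by (induction Fs) (auto simp: is_weyl_wone is_weyl_wmul)

lemma is_weyl_esym: "is_weyl (esym (Xgen p) xs)"
  unfolding esym_def
  by (rule is_weyl_wsum) (auto intro!: is_weyl_wprod simp: is_weyl_Xgen finite_permutations)

lemma sum_mon_le_mzero: "(\<Sum>b\<in>{b::'n mon. b \<le> mzero}. f b) = f mzero"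
proof -
  have "{b::'n mon. b \<le> mzero} = {mzero}" by (auto simp: mon_le_mzero_iff)
  then show ?thesis by simp
qed

lemma fock_vac:
  fixes F :: "'n::finite mon \<Rightarrow> 'n mon \<Rightarrow> 'k::comm_ring_1"
  shows "fock F vac = F mzero"
proof
  fix e
  have vac_support: "{c. (vac c :: 'k) \<noteq> 0} = {mzero}" by (auto simp: vac_def)
  have "fock F vac e = (\<Sum>a\<in>{a. a \<le> e}. if a = e then F mzero a else 0)"
    unfolding fock_def vac_support
    by (simp add: sum_mon_le_mzero, unfold vac_def, intro sum.cong refl) simp
  also have "\<dots> = F mzero e"
    by (simp add: finite_mon_le)
  finally show "fock F vac e = F mzero e" .
qed

definition mfalling :: "'n::finite mon \<Rightarrow> 'n mon \<Rightarrow> nat" where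
  "mfalling c m = mchoose c m * mfact m"

lemma mfalling_eq_prod: "mfalling a s = (\<Prod>k\<in>UNIV. (a k choose s k) * fact (s k))"
  by (simp add: mfalling_def mchoose_def mfact_def prod.distrib)

text \<open>\<open>fock_mon F c t\<close> is the coefficient of \<open>x\<^sup>t\<close> in \<open>F \<triangleright> x\<^sup>c\<close>, using
  \<open>(x\<^sup>a\<^sup>' \<partial>\<^sup>m) \<triangleright> x\<^sup>c = C(c,m) m! x\<^sup>a\<^sup>'\<^sup>+\<^sup>c\<^sup>-\<^sup>m\<close>.\<close>

definition fock_mon :: "('n::finite mon \<Rightarrow> 'n mon \<Rightarrow> 'k::comm_ring_1) \<Rightarrow> 'n mon \<Rightarrow> 'n mon \<Rightarrow> 'k" where
  "fock_mon F c t = (\<Sum>m\<in>{m. m \<le> c}. \<Sum>a'\<in>{a'. a' \<le> t}.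
     if (\<lambda>i. a' i + (c i - m i)) = t then F m a' * of_nat (mfalling c m) else 0)"

lemma fock_mon_eq:
  "fock_mon F c t = (\<Sum>m\<in>{m. m \<le> c}.
     if (\<lambda>k. c k - m k) \<le> t then F m (\<lambda>k. t k - (c k - m k)) * of_nat (mfalling c m) else 0)"
  unfolding fock_mon_def
proof (rule sum.cong[OF refl])
  fix m
  have "(\<lambda>i. t i - (c i - m i)) \<le> t"
    by (simp add: le_fun_def)
  then show "(\<Sum>a'\<in>{a'. a' \<le> t}. if (\<lambda>i. a' i + (c i - m i)) = t then F m a' * of_nat (mfalling c m) else 0)
     = (if (\<lambda>k. c k - m k) \<le> t then F m (\<lambda>k. t k - (c k - m k)) * of_nat (mfalling c m) else 0)"
    unfolding mon_add_eq_iff by (subst sum_if_conj_eq) (simp_all add: finite_mon_le)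
qed

lemma wmul_mzero:
  assumes "finite C" "{c. G mzero c \<noteq> 0} \<subseteq> C"
  shows "wmul F G mzero a = (\<Sum>c\<in>C. G mzero c * fock_mon F c a)"
proof -
  have "wmul F G mzero a = (\<Sum>c\<in>{c. G mzero c \<noteq> 0}. G mzero c * fock_mon F c a)"
    unfolding wmul_def fock_mon_def mfalling_def
    by (simp only: sum_mon_le_mzero)
       (simp add: mzero_def sum_distrib_left, intro sum.cong refl, simp add: mult_ac mzero_def)
  also have "\<dots> = (\<Sum>c\<in>C. G mzero c * fock_mon F c a)"
    by (rule sum.mono_neutral_left) (use assms in auto)
  finally show ?thesis .
qed

definition sym_prod :: "('n::finite \<Rightarrow> ('n mon \<Rightarrow> 'n mon \<Rightarrow> 'k::comm_ring_1)) \<Rightarrow> (nat \<Rightarrow> 'n) \<Rightarrow> nat set \<Rightarrow> ('n mon \<Rightarrow> 'n mon \<Rightarrow> 'k)" where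
  "sym_prod X h A = wsum (\<lambda>js. wprod (map (\<lambda>t. X (h t)) js)) (permutations_of_set A)"

lemma sym_prod_split_first:
  assumes "finite A" "A \<noteq> {}"
  shows "sym_prod X h A b a = (\<Sum>u\<in>A. \<Sum>js\<in>permutations_of_set (A - {u}).
            wmul (X (h u)) (wprod (map (\<lambda>t. X (h t)) js)) b a)"
proof -
  have "sym_prod X h A b a = (\<Sum>js\<in>(\<Union>u\<in>A. (\<lambda>xs. u # xs) ` permutations_of_set (A - {u})).
             wprod (map (\<lambda>t. X (h t)) js) b a)"
    unfolding sym_prod_def wsum_def using permutations_of_set_nonempty[OF assms(2)] by simp
  also have "\<dots> = (\<Sum>u\<in>A. \<Sum>js\<in>(\<lambda>xs. u # xs) ` permutations_of_set (A - {u}).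
             wprod (map (\<lambda>t. X (h t)) js) b a)"
    by (rule sum.UNION_disjoint) (use assms in auto)
  also have "\<dots> = (\<Sum>u\<in>A. \<Sum>js\<in>permutations_of_set (A - {u}).
            wmul (X (h u)) (wprod (map (\<lambda>t. X (h t)) js)) b a)"
    by (rule sum.cong[OF refl], subst sum.reindex) (auto simp: wprod_def)
  finally show ?thesis .
qed

lemma esym_eq_sym_prod: "esym X xs = sym_prod X (\<lambda>t. xs ! t) {..<length xs}"
proof -
  let ?n = "length xs"
  let ?T = "permutations_of_set {..<?n}"
  let ?list_of = "\<lambda>\<sigma>. map \<sigma> [0..<?n]"
  let ?perm_of = "\<lambda>js t. if t < ?n then js ! t else t"
  have "(\<Sum>\<sigma>\<in>{\<sigma>. \<sigma> permutes {..<?n}}. wprod (map (\<lambda>t. X (xs ! \<sigma> t)) [0..<?n]) b a)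
      = (\<Sum>js\<in>?T. wprod (map (\<lambda>t. X (xs ! t)) js) b a)" for b a
  proof (rule sum.reindex_bij_witness[where j = ?list_of and i = ?perm_of])
    fix \<sigma> assume "\<sigma> \<in> {\<sigma>. \<sigma> permutes {..<?n}}"
    then have p: "\<sigma> permutes {..<?n}" by simp
    show "?perm_of (?list_of \<sigma>) = \<sigma>"
      using permutes_not_in[OF p] by (auto simp: fun_eq_iff)
    show "?list_of \<sigma> \<in> ?T"
      using permutes_image[OF p] permutes_inj_on[OF p]
      by (auto simp: permutations_of_set_def distinct_map atLeast0LessThan)
    show "wprod (map (\<lambda>t. X (xs ! t)) (?list_of \<sigma>)) b a = wprod (map (\<lambda>t. X (xs ! \<sigma> t)) [0..<?n]) b a"
      by (simp add: comp_def)
  next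
    fix js assume js: "js \<in> ?T"
    then have len: "length js = ?n" by (simp add: length_finite_permutations_of_set)
    from js have d: "distinct js" and s: "set js = {..<?n}" by (auto simp: permutations_of_set_def)
    show "?list_of (?perm_of js) = js"
      using len by (auto intro: nth_equalityI)
    have "?perm_of js ` {..<?n} = set js"
      using len by (auto simp: set_conv_nth)
    then have "bij_betw (?perm_of js) {..<?n} {..<?n}"
      using d len s by (auto simp: bij_betw_def inj_on_def nth_eq_iff_index_eq)
    then show "?perm_of js \<in> {\<sigma>. \<sigma> permutes {..<?n}}"
      by (auto intro!: bij_imp_permutes split: if_splits)
  qed
  then show ?thesis unfolding esym_def sym_prod_def wsum_def by (auto simp: fun_eq_iff)
qed

lemma esym_replicate:
  "esym X (replicate c i) = wscale (of_nat (fact c)) (wprod (replicate c (X i)))"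
proof (intro ext)
  fix b a
  have "esym X (replicate c i) b a = (\<Sum>\<sigma>\<in>{\<sigma>. \<sigma> permutes {..<c}}. wprod (replicate c (X i)) b a)"
    unfolding esym_def wsum_def length_replicate
  proof (intro sum.cong refl)
    fix \<sigma> assume "\<sigma> \<in> {\<sigma>. \<sigma> permutes {..<c}}"
    then have "\<sigma> t < c" if "t < c" for t
      using permutes_in_image[of \<sigma> "{..<c}" t] that by simp
    then have "map (\<lambda>t. X (replicate c i ! \<sigma> t)) [0..<c] = replicate c (X i)"
      by (intro nth_equalityI) auto
    then show "wprod (map (\<lambda>t. X (replicate c i ! \<sigma> t)) [0..<c]) b a = wprod (replicate c (X i)) b a"
      by simp
  qed
  also have "\<dots> = of_nat (fact c) * wprod (replicate c (X i)) b a"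
    by (simp add: card_permutations[of "{..<c}" c])
  finally show "esym X (replicate c i) b a = wscale (of_nat (fact c)) (wprod (replicate c (X i))) b a"
    by (simp add: wscale_def)
qed

subsection \<open>The Euler identity for the generators\<close>

text \<open>\<open>xcorr p l i b\<close> is the coefficient of \<open>x\<^sub>l \<partial>\<^sup>b\<close> in \<open>X\<^sub>i - x\<^sub>i\<close>, and
  \<open>pser p l i j m\<close> the coefficient of \<open>\<partial>\<^sup>m\<close> in \<open>\<Sum>\<^sub>N p\<^sup>N\<^sup>-\<^sup>1\<^sup>,\<^sup>l\<^sub>i\<^sub>j\<close>, so that
  \<open>X\<^sub>i = x\<^sub>i + \<Sum>\<^sub>l x\<^sub>l \<Sum>\<^sub>j pser p l i j (\<partial>) \<partial>\<^sup>j\<close>.\<close>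

definition xcorr :: "(nat \<Rightarrow> 'n \<Rightarrow> 'n \<Rightarrow> 'n \<Rightarrow> 'n mon \<Rightarrow> 'k::comm_ring_1) \<Rightarrow> 'n \<Rightarrow> 'n \<Rightarrow> 'n::finite mon \<Rightarrow> 'k" where
  "xcorr p l i b = (\<Sum>N\<in>{1..mdeg b}. \<Sum>j\<in>UNIV.
                     if 1 \<le> b j then p (N - 1) l i j (\<lambda>t. b t - delta j t) else 0)"

definition pser :: "(nat \<Rightarrow> 'n \<Rightarrow> 'n \<Rightarrow> 'n \<Rightarrow> 'n mon \<Rightarrow> 'k::comm_ring_1) \<Rightarrow> 'n \<Rightarrow> 'n \<Rightarrow> 'n \<Rightarrow> 'n::finite mon \<Rightarrow> 'k" where
  "pser p l i j m = (\<Sum>N\<in>{1..Suc (mdeg m)}. p (N - 1) l i j m)"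

lemma Xgen_eq_xcorr:
  "Xgen p i b a = (if b = mzero \<and> a = delta i then 1 else 0) + (\<Sum>l\<in>UNIV. if a = delta l then xcorr p l i b else 0)"
  unfolding Xgen_def xcorr_def by simp

lemma mdeg_eq_Suc_minus_delta:
  assumes "1 \<le> m j"
  shows "mdeg m = Suc (mdeg (\<lambda>k. m k - delta j k))"
proof -
  have "mdeg m = (\<Sum>k\<in>UNIV. (m k - delta j k) + delta j k)"
    unfolding mdeg_def using assms by (intro sum.cong) (auto simp: delta_def)
  also have "\<dots> = mdeg (\<lambda>k. m k - delta j k) + (\<Sum>k\<in>UNIV. delta j k)"
    by (simp add: sum.distrib mdeg_def)
  also have "(\<Sum>k\<in>UNIV. delta j k) = 1"
    by (simp add: delta_def)
  finally show ?thesis by simp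
qed

lemma xcorr_eq_pser: "xcorr p l i m = (\<Sum>j\<in>UNIV. if 1 \<le> m j then pser p l i j (\<lambda>k. m k - delta j k) else 0)"
  unfolding xcorr_def pser_def
  by (subst sum.swap, intro sum.cong refl) (auto simp: mdeg_eq_Suc_minus_delta)

text \<open>\<open>corr_act p l i c t\<close> is the coefficient of \<open>x\<^sup>t\<close> in the action of the \<open>x\<^sub>l\<close>-term
  of \<open>X\<^sub>i - x\<^sub>i\<close> on \<open>x\<^sup>c\<close>.\<close>

definition corr_act :: "(nat \<Rightarrow> 'n \<Rightarrow> 'n \<Rightarrow> 'n \<Rightarrow> 'n mon \<Rightarrow> 'k::comm_ring_1) \<Rightarrow> 'n \<Rightarrow> 'n \<Rightarrow> 'n::finite mon \<Rightarrow> 'n mon \<Rightarrow> 'k" where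
  "corr_act p l i c t = (\<Sum>m\<in>{m. m \<le> c}.
     if t = (\<lambda>k. delta l k + (c k - m k)) then xcorr p l i m * of_nat (mfalling c m) else 0)"

lemma fock_mon_Xgen:
  "fock_mon (Xgen p i) c t = (if t = (\<lambda>k. delta i k + c k) then 1 else 0) + (\<Sum>l\<in>UNIV. corr_act p l i c t)"
proof -
  have "fock_mon (Xgen p i) c t = (\<Sum>m\<in>{m. m \<le> c}.
      (if t = (\<lambda>k. delta i k + c k) \<and> m = mzero then of_nat (mfalling c m) else 0)
      + (\<Sum>l\<in>UNIV. if t = (\<lambda>k. delta l k + (c k - m k)) then xcorr p l i m * of_nat (mfalling c m) else 0))"
    unfolding fock_mon_eq Xgen_eq_xcorr
    by (intro sum.cong refl)
       (auto simp: mzero_def distrib_right sum_distrib_right simp flip: mon_diff_eq_iff intro!: sum.cong)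
  also have "\<dots> = (if t = (\<lambda>k. delta i k + c k) then 1 else 0) + (\<Sum>l\<in>UNIV. corr_act p l i c t)"
    unfolding sum.distrib corr_act_def
    by (subst sum_if_conj_eq, simp add: finite_mon_le)
       (auto simp: sum.swap[of _ UNIV] mfalling_def le_fun_def mzero_def
         mchoose_mzero[unfolded mzero_def] mfact_mzero[unfolded mzero_def])
  finally show ?thesis .
qed

lemma binomial_fact_absorption: "x * ((x - 1) choose y) * fact y = (x choose Suc y) * fact (Suc y)"
proof -
  have "(x choose Suc y) * fact (Suc y) = (Suc y * (x choose Suc y)) * fact y"
    by (simp add: algebra_simps)
  also have "\<dots> = x * ((x - 1) choose y) * fact y"
    by (simp only: binomial_absorption)
  finally show ?thesis by simp
qed

lemma mfalling_shift_delta: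
  "a i * mfalling (\<lambda>k. a k - delta i k) (\<lambda>k. m k + delta j k) = mfalling a (\<lambda>k. m k + delta i k + delta j k)"
proof -
  define g where "g k = ((a k - delta i k) choose (m k + delta j k)) * fact (m k + delta j k)" for k
  define h where "h k = (a k choose (m k + delta i k + delta j k)) * fact (m k + delta i k + delta j k)" for k
  have "(\<Prod>k\<in>UNIV-{i}. g k) = (\<Prod>k\<in>UNIV-{i}. h k)"
    by (rule prod.cong) (auto simp: delta_def g_def h_def)
  moreover have "a i * g i = h i"
    using binomial_fact_absorption[of "a i" "m i + delta j i"] by (simp add: g_def h_def delta_def)
  ultimately show ?thesis
    unfolding mfalling_eq_prod g_def[symmetric] h_def[symmetric]
    by (simp add: prod.remove[of UNIV i] mult.assoc)
qed

lemma mfalling_shift_delta_eq_0: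
  assumes "\<not> (\<lambda>k. m k + delta j k) \<le> (\<lambda>k. a k - delta i k)"
  shows "mfalling a (\<lambda>k. m k + delta i k + delta j k) = 0"
proof -
  from assms obtain k where "\<not> m k + delta j k \<le> a k - delta i k" by (auto simp: le_fun_def)
  then have "a k < m k + delta i k + delta j k" by linarith
  then show ?thesis unfolding mfalling_eq_prod by (intro prod_zero) auto
qed

text \<open>Substituting \<open>m = m' + e\<^sub>j\<close> turns \<open>a\<^sub>i \<partial>\<^sup>m x\<^sup>a\<^sup>-\<^sup>e\<^sup>i\<close> into
  \<open>\<partial>\<^sup>m\<^sup>'\<^sup>+\<^sup>e\<^sup>i\<^sup>+\<^sup>e\<^sup>j x\<^sup>a\<close>, which is symmetric in \<open>i\<close> and \<open>j\<close>.\<close>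

lemma sum_shift_delta:
  fixes H R :: "'n::finite mon \<Rightarrow> 'k::comm_ring_1"
  shows "(\<Sum>m\<in>{m. m \<le> (\<lambda>k. a k - delta i k)}. if 1 \<le> m j then
       of_nat (a i * mfalling (\<lambda>k. a k - delta i k) m) * H (\<lambda>k. (a k - delta i k) - m k) * R (\<lambda>k. m k - delta j k) else 0)
    = (\<Sum>m'\<in>{m'. m' \<le> a}. of_nat (mfalling a (\<lambda>k. m' k + delta i k + delta j k))
          * H (\<lambda>k. a k - (m' k + delta i k + delta j k)) * R m')"
    (is "(\<Sum>m\<in>_. ?\<Psi> m) = (\<Sum>m'\<in>_. ?\<Phi> m')")
proof -
  define s where "s m' = (\<lambda>k. m' k + delta j k)" for m' :: "'n mon"
  define V where "V = {m'. s m' \<le> (\<lambda>k. a k - delta i k)}"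
  have "V \<subseteq> {m'. m' \<le> a}"
    by (auto simp: V_def s_def le_fun_def) (metis add_leE diff_le_self le_trans)
  then have "(\<Sum>m'\<in>{m'. m' \<le> a}. ?\<Phi> m') = (\<Sum>m'\<in>V. ?\<Phi> m')"
    by (intro sum.mono_neutral_right)
       (auto simp: finite_mon_le V_def s_def mfalling_shift_delta_eq_0)
  also have "\<dots> = (\<Sum>m'\<in>V. ?\<Psi> (s m'))"
  proof (rule sum.cong[OF refl])
    fix m'
    have "(\<lambda>k. (a k - delta i k) - s m' k) = (\<lambda>k. a k - (m' k + delta i k + delta j k))"
      by (simp add: s_def fun_eq_iff algebra_simps)
    moreover have "(\<lambda>k. s m' k - delta j k) = m'" "1 \<le> s m' j"
      by (simp_all add: s_def delta_def)
    ultimately show "?\<Phi> m' = ?\<Psi> (s m')"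
      unfolding s_def mfalling_shift_delta by simp
  qed
  also have "\<dots> = (\<Sum>m\<in>s ` V. ?\<Psi> m)"
    by (subst sum.reindex) (auto simp: inj_on_def s_def fun_eq_iff)
  also have "\<dots> = (\<Sum>m\<in>{m. m \<le> (\<lambda>k. a k - delta i k)}. ?\<Psi> m)"
  proof (rule sum.mono_neutral_left)
    show "\<forall>m\<in>{m. m \<le> (\<lambda>k. a k - delta i k)} - s ` V. ?\<Psi> m = 0"
    proof
      fix m assume m: "m \<in> {m. m \<le> (\<lambda>k. a k - delta i k)} - s ` V"
      show "?\<Psi> m = 0"
      proof (cases "1 \<le> m j")
        case True
        then have "m = s (\<lambda>k. m k - delta j k)" by (auto simp: s_def delta_def fun_eq_iff)
        moreover have "(\<lambda>k. m k - delta j k) \<in> V"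
          using m True by (auto simp: V_def s_def delta_def le_fun_def)
        ultimately show ?thesis using m by blast
      qed simp
    qed
  qed (auto simp: finite_mon_le V_def)
  finally show ?thesis by simp
qed

lemma corr_act_scaled:
  fixes p :: "nat \<Rightarrow> 'n::finite \<Rightarrow> 'n \<Rightarrow> 'n \<Rightarrow> 'n mon \<Rightarrow> 'k::comm_ring_1"
  shows "of_nat (a i) * corr_act p l i (\<lambda>k. a k - delta i k) t =
    (\<Sum>j\<in>UNIV. \<Sum>m'\<in>{m'. m' \<le> a}. of_nat (mfalling a (\<lambda>k. m' k + delta i k + delta j k))
       * (if t = (\<lambda>k. delta l k + (a k - (m' k + delta i k + delta j k))) then 1 else 0) * pser p l i j m')"
proof -
  define H where "H x = (if t = (\<lambda>k. delta l k + x k) then 1 else (0::'k))" for x :: "'n mon"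
  have "of_nat (a i) * corr_act p l i (\<lambda>k. a k - delta i k) t =
    (\<Sum>m\<in>{m. m \<le> (\<lambda>k. a k - delta i k)}. \<Sum>j\<in>UNIV. if 1 \<le> m j then
       of_nat (a i * mfalling (\<lambda>k. a k - delta i k) m) * H (\<lambda>k. (a k - delta i k) - m k)
       * pser p l i j (\<lambda>k. m k - delta j k)
     else 0)"
    unfolding corr_act_def xcorr_eq_pser sum_distrib_left H_def
    by (intro sum.cong refl) (auto simp: sum_distrib_left sum_distrib_right mult_ac intro!: sum.cong sum.neutral)
  also have "\<dots> = (\<Sum>j\<in>UNIV. \<Sum>m\<in>{m. m \<le> (\<lambda>k. a k - delta i k)}. if 1 \<le> m j then
       of_nat (a i * mfalling (\<lambda>k. a k - delta i k) m) * H (\<lambda>k. (a k - delta i k) - m k)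
       * pser p l i j (\<lambda>k. m k - delta j k)
     else 0)"
    by (rule sum.swap)
  also have "\<dots> = (\<Sum>j\<in>UNIV. \<Sum>m'\<in>{m'. m' \<le> a}. of_nat (mfalling a (\<lambda>k. m' k + delta i k + delta j k))
       * H (\<lambda>k. a k - (m' k + delta i k + delta j k)) * pser p l i j m')"
    by (rule sum.cong[OF refl], rule sum_shift_delta)
  finally show ?thesis unfolding H_def .
qed

lemma sum_sum_antisym_eq_0:
  fixes f :: "'a \<Rightarrow> 'a \<Rightarrow> 'k::idom"
  assumes "\<And>i j. f j i = - f i j" and "(2::'k) \<noteq> 0"
  shows "(\<Sum>i\<in>A. \<Sum>j\<in>A. f i j) = 0"
proof -
  have "(\<Sum>i\<in>A. \<Sum>j\<in>A. f i j) = (\<Sum>j\<in>A. \<Sum>i\<in>A. f i j)"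
    by (rule sum.swap)
  also have "\<dots> = (\<Sum>j\<in>A. \<Sum>i\<in>A. - f j i)"
    by (intro sum.cong refl) (rule assms(1))
  also have "\<dots> = - (\<Sum>i\<in>A. \<Sum>j\<in>A. f i j)"
    by (simp add: sum_negf)
  finally have "(\<Sum>i\<in>A. \<Sum>j\<in>A. f i j) + (\<Sum>i\<in>A. \<Sum>j\<in>A. f i j) = 0"
    by (metis add.right_inverse)
  then have "2 * (\<Sum>i\<in>A. \<Sum>j\<in>A. f i j) = 0"
    by (simp only: mult_2)
  with assms(2) show ?thesis by simp
qed

lemma pser_antisym:
  assumes "\<And>d l i j m. p d l i j m = - p d l j i m"
  shows "pser p l j i m = - pser p l i j m"
  unfolding pser_def by (subst assms) (simp add: sum_negf)

lemma sum_corr_act_eq_0: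
  fixes p :: "nat \<Rightarrow> 'n::finite \<Rightarrow> 'n \<Rightarrow> 'n \<Rightarrow> 'n mon \<Rightarrow> 'k::idom"
  assumes antisym: "\<And>d l i j m. p d l i j m = - p d l j i m" and two: "(2::'k) \<noteq> 0"
  shows "(\<Sum>i\<in>UNIV. of_nat (a i) * (\<Sum>l\<in>UNIV. corr_act p l i (\<lambda>k. a k - delta i k) t)) = 0"
proof -
  have "(\<Sum>i\<in>UNIV. of_nat (a i) * (\<Sum>l\<in>UNIV. corr_act p l i (\<lambda>k. a k - delta i k) t))
      = (\<Sum>l\<in>UNIV. \<Sum>i\<in>UNIV. of_nat (a i) * corr_act p l i (\<lambda>k. a k - delta i k) t)"
    unfolding sum_distrib_left by (rule sum.swap)
  also have "\<dots> = 0"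
    unfolding corr_act_scaled
  proof (rule sum.neutral, rule ballI, rule sum_sum_antisym_eq_0[OF _ two])
    fix l i j :: 'n
    show "(\<Sum>m'\<in>{m'. m' \<le> a}. of_nat (mfalling a (\<lambda>k. m' k + delta j k + delta i k))
       * (if t = (\<lambda>k. delta l k + (a k - (m' k + delta j k + delta i k))) then 1 else 0) * pser p l j i m')
      = - (\<Sum>m'\<in>{m'. m' \<le> a}. of_nat (mfalling a (\<lambda>k. m' k + delta i k + delta j k))
       * (if t = (\<lambda>k. delta l k + (a k - (m' k + delta i k + delta j k))) then 1 else 0) * pser p l i j m')"
      by (simp add: pser_antisym[OF antisym, where l = l and i = i and j = j] sum_negf add_ac)
  qed
  finally show ?thesis .
qed

lemma euler_identity:
  fixes p :: "nat \<Rightarrow> 'n::finite \<Rightarrow> 'n \<Rightarrow> 'n \<Rightarrow> 'n mon \<Rightarrow> 'k::idom"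
  assumes "\<And>d l i j m. p d l i j m = - p d l j i m" and "(2::'k) \<noteq> 0"
  shows "(\<Sum>i\<in>UNIV. of_nat (a i) * fock_mon (Xgen p i) (\<lambda>k. a k - delta i k) t)
       = of_nat (mdeg a) * (if t = a then 1 else 0)"
proof -
  have "a i \<noteq> 0 \<Longrightarrow> (\<lambda>k. delta i k + (a k - delta i k)) = a" for i
    by (auto simp: fun_eq_iff delta_def)
  then have "(\<Sum>i\<in>UNIV. of_nat (a i) * (if t = (\<lambda>k. delta i k + (a k - delta i k)) then 1 else 0))
      = (\<Sum>i\<in>UNIV. of_nat (a i) * (if t = a then 1 else (0::'k)))"
    by (intro sum.cong refl) (metis mult_not_zero of_nat_0)
  then show ?thesis
    unfolding fock_mon_Xgen distrib_left sum.distrib sum_corr_act_eq_0[OF assms]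
    by (simp add: mdeg_def sum_distrib_right)
qed

subsection \<open>The \<open>\<partial>\<close>-free part of symmetrised products\<close>

definition mcount :: "(nat \<Rightarrow> 'n) \<Rightarrow> nat set \<Rightarrow> 'n mon" where
  "mcount h A = (\<lambda>i. card {s\<in>A. h s = i})"

lemma sum_mcount:
  fixes \<phi> :: "'n::finite \<Rightarrow> 'k::comm_semiring_1"
  assumes "finite A"
  shows "(\<Sum>b\<in>A. \<phi> (h b)) = (\<Sum>i\<in>UNIV. of_nat (mcount h A i) * \<phi> i)"
proof -
  have "(\<Sum>b\<in>A. \<phi> (h b)) = (\<Sum>i\<in>UNIV. \<Sum>b\<in>{x. x \<in> A \<and> h x = i}. \<phi> (h b))"
    by (rule sum.group[symmetric]) (use assms in auto)
  also have "\<dots> = (\<Sum>i\<in>UNIV. of_nat (mcount h A i) * \<phi> i)"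
    by (simp add: mcount_def)
  finally show ?thesis .
qed

lemma mdeg_mcount:
  fixes h :: "nat \<Rightarrow> 'n::finite"
  shows "finite A \<Longrightarrow> mdeg (mcount h A) = card A"
  using sum_mcount[of A "\<lambda>_. 1::nat" h] by (simp add: mdeg_def)

lemma mcount_remove:
  assumes "finite A" "b \<in> A"
  shows "mcount h (A - {b}) = (\<lambda>k. mcount h A k - delta (h b) k)"
proof
  fix k
  have "{s \<in> A - {b}. h s = k} = {s \<in> A. h s = k} - {b}" by auto
  then show "mcount h (A - {b}) k = mcount h A k - delta (h b) k"
    using assms by (cases "k = h b") (simp_all add: mcount_def delta_def)
qed

lemma mcount_nth: "mcount (\<lambda>t. xs ! t) {..<length xs} = count_list xs"
  by (auto simp: mcount_def fun_eq_iff count_list_eq_length_filter length_filter_conv_card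
           intro!: arg_cong[where f = card])

lemma sum_wmul_sym_prod_mzero:
  assumes "finite B" and "\<And>i. is_weyl (X i)"
    and S: "\<And>c. sym_prod X h B mzero c = r * (if c = m then 1 else 0)"
  shows "(\<Sum>js\<in>permutations_of_set B. wmul F (wprod (map (\<lambda>t. X (h t)) js)) mzero t) = r * fock_mon F m t"
proof -
  let ?W = "\<lambda>js. wprod (map (\<lambda>t. X (h t)) js)"
  define C where "C = insert m (\<Union>js\<in>permutations_of_set B. {c. ?W js mzero c \<noteq> 0})"
  have "is_weyl (?W js)" for js
    by (rule is_weyl_wprod) (use assms(2) in auto)
  then have "finite C"
    by (auto simp: C_def is_weyl_def)
  then have "(\<Sum>js\<in>permutations_of_set B. wmul F (?W js) mzero t)
      = (\<Sum>js\<in>permutations_of_set B. \<Sum>c\<in>C. ?W js mzero c * fock_mon F c t)"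
    by (intro sum.cong refl wmul_mzero) (auto simp: C_def)
  also have "\<dots> = (\<Sum>c\<in>C. sym_prod X h B mzero c * fock_mon F c t)"
    by (subst sum.swap) (simp add: sym_prod_def wsum_def sum_distrib_right)
  also have "\<dots> = (\<Sum>c\<in>C. if c = m then r * fock_mon F c t else 0)"
    by (intro sum.cong refl) (simp add: S)
  also have "\<dots> = r * fock_mon F m t"
    using \<open>finite C\<close> by (simp add: C_def)
  finally show ?thesis .
qed

lemma sym_prod_mzero:
  fixes p :: "nat \<Rightarrow> 'n::finite \<Rightarrow> 'n \<Rightarrow> 'n \<Rightarrow> 'n mon \<Rightarrow> 'k::idom"
  assumes antisym: "\<And>d l i j m. p d l i j m = - p d l j i m" and two: "(2::'k) \<noteq> 0"
  shows "finite A \<Longrightarrow> sym_prod (Xgen p) h A mzero t = of_nat (fact (card A)) * (if t = mcount h A then 1 else 0)"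
proof (induction "card A" arbitrary: A t)
  case 0
  then show ?case
    by (simp add: sym_prod_def wsum_def wprod_def wone_def mcount_def mzero_def)
next
  case (Suc n)
  then have A: "finite A" "A \<noteq> {}" by auto
  have "sym_prod (Xgen p) h A mzero t
      = (\<Sum>u\<in>A. of_nat (fact n) * fock_mon (Xgen p (h u)) (\<lambda>k. mcount h A k - delta (h u) k) t)"
    unfolding sym_prod_split_first[OF A]
  proof (rule sum.cong[OF refl], rule sum_wmul_sym_prod_mzero)
    fix u assume "u \<in> A"
    then show "sym_prod (Xgen p) h (A - {u}) mzero c =
        of_nat (fact n) * (if c = (\<lambda>k. mcount h A k - delta (h u) k) then 1 else 0)" for c
      using Suc.hyps(1)[of "A - {u}"] Suc.hyps(2)[symmetric] A by (simp add: mcount_remove)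
  qed (use A in \<open>auto simp: is_weyl_Xgen\<close>)
  also have "\<dots> = of_nat (fact n) * (\<Sum>i\<in>UNIV. of_nat (mcount h A i) * fock_mon (Xgen p i) (\<lambda>k. mcount h A k - delta i k) t)"
    by (simp only: sum_distrib_left[symmetric]
        sum_mcount[OF A(1), where \<phi> = "\<lambda>i. fock_mon (Xgen p i) (\<lambda>k. mcount h A k - delta i k) t"])
  also have "\<dots> = of_nat (fact (card A)) * (if t = mcount h A then 1 else 0)"
    using Suc.hyps(2)[symmetric]
    by (simp add: euler_identity[OF antisym two] mdeg_mcount[OF A(1)] algebra_simps)
  finally show ?case .
qed

lemma esym_mzero:
  fixes p :: "nat \<Rightarrow> 'n::finite \<Rightarrow> 'n \<Rightarrow> 'n \<Rightarrow> 'n mon \<Rightarrow> 'k::idom"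
  assumes "\<And>d l i j m. p d l i j m = - p d l j i m" and "(2::'k) \<noteq> 0"
  shows "esym (Xgen p) xs mzero t = of_nat (fact (length xs)) * mono_of xs t"
  using sym_prod_mzero[OF assms, where A = "{..<length xs}" and h = "\<lambda>t. xs ! t" and t = t]
  by (simp add: esym_eq_sym_prod mcount_nth mono_of_def)

subsection \<open>Symmetrisation maps on polynomials\<close>

definition mon_list :: "'n::{finite,linorder} mon \<Rightarrow> 'n list" where
  "mon_list a = sorted_list_of_multiset (Abs_multiset a)"

lemma count_list_mon_list: "count_list (mon_list a) = a"
proof
  fix x
  have "count_list (mon_list a) x = count (Abs_multiset a) x"
    by (simp add: mon_list_def flip: count_mset)
  also have "\<dots> = a x"
    by (subst count_Abs_multiset) auto
  finally show "count_list (mon_list a) x = a x" .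
qed

lemma mon_list_count_list: "sorted xs \<Longrightarrow> mon_list (count_list xs) = xs"
proof -
  have "Abs_multiset (count_list xs) = mset xs"
    by (metis count_inverse count_mset ext)
  then show "sorted xs \<Longrightarrow> mon_list (count_list xs) = xs"
    by (simp add: mon_list_def sorted_sort_id)
qed

lemma sorted_eq_if_count_list_eq:
  "sorted (xs::'n::{finite,linorder} list) \<Longrightarrow> sorted ys \<Longrightarrow> count_list xs = count_list ys \<Longrightarrow> xs = ys"
  by (metis mon_list_count_list)

lemma is_poly_mono_of: "is_poly (mono_of xs :: 'n mon \<Rightarrow> 'k::zero_neq_one)"
proof -
  have "{a. (mono_of xs a :: 'k) \<noteq> 0} = {count_list xs}"
    by (auto simp: mono_of_def)
  then show ?thesis unfolding is_poly_def by simp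
qed

lemma is_poly_zero: "is_poly (\<lambda>_. 0)"
  by (simp add: is_poly_def)

definition etilde :: "(nat \<Rightarrow> 'n \<Rightarrow> 'n \<Rightarrow> 'n \<Rightarrow> 'n mon \<Rightarrow> 'k::comm_ring_1) \<Rightarrow> ('n::{finite,linorder} mon \<Rightarrow> 'k) \<Rightarrow> ('n mon \<Rightarrow> 'n mon \<Rightarrow> 'k)" where
  "etilde p P = wsum (\<lambda>a. wscale (P a) (esym (Xgen p) (mon_list a))) {a. P a \<noteq> 0}"

lemma etilde_eq_sum:
  assumes "finite S" "{a. P a \<noteq> 0} \<subseteq> S"
  shows "etilde p P b a' = (\<Sum>a\<in>S. P a * esym (Xgen p) (mon_list a) b a')"
  unfolding etilde_def wsum_def wscale_def
  by (rule sum.mono_neutral_left) (use assms in auto)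

lemma lin_map_etilde:
  fixes p :: "nat \<Rightarrow> 'n::{finite,linorder} \<Rightarrow> 'n \<Rightarrow> 'n \<Rightarrow> 'n mon \<Rightarrow> 'k::comm_ring_1"
  shows "lin_map (etilde p)"
  unfolding lin_map_def
proof (intro conjI allI impI ext)
  fix P Q :: "'n mon \<Rightarrow> 'k" and b a'
  assume "is_poly P" "is_poly Q"
  then have fin: "finite ({a. P a \<noteq> 0} \<union> {a. Q a \<noteq> 0})" by (simp add: is_poly_def)
  have "etilde p (\<lambda>a. P a + Q a) b a'
      = (\<Sum>a\<in>{a. P a \<noteq> 0} \<union> {a. Q a \<noteq> 0}. (P a + Q a) * esym (Xgen p) (mon_list a) b a')"
    by (rule etilde_eq_sum[OF fin]) auto
  also have "\<dots> = etilde p P b a' + etilde p Q b a'"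
    by (simp add: distrib_right sum.distrib etilde_eq_sum[OF fin])
  finally show "etilde p (\<lambda>a. P a + Q a) b a' = wadd (etilde p P) (etilde p Q) b a'"
    by (simp add: wadd_def)
next
  fix c and P :: "'n mon \<Rightarrow> 'k" and b a'
  assume "is_poly P"
  then have fin: "finite {a. P a \<noteq> 0}" by (simp add: is_poly_def)
  have "etilde p (\<lambda>a. c * P a) b a' = (\<Sum>a\<in>{a. P a \<noteq> 0}. c * P a * esym (Xgen p) (mon_list a) b a')"
    by (rule etilde_eq_sum[OF fin]) auto
  then show "etilde p (\<lambda>a. c * P a) b a' = wscale c (etilde p P) b a'"
    by (simp add: wscale_def etilde_eq_sum[OF fin] sum_distrib_left mult.assoc)
qed

lemma is_weyl_etilde: "is_poly P \<Longrightarrow> is_weyl (etilde p P)"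
  unfolding etilde_def is_poly_def
  by (intro is_weyl_wsum is_weyl_wscale is_weyl_esym) auto

lemma etilde_mono_of: "sorted xs \<Longrightarrow> etilde p (mono_of xs) = esym (Xgen p) xs"
  by (rule ext)+
     (simp add: etilde_eq_sum[where S = "{count_list xs}"] mono_of_def mon_list_count_list)

lemma etilde_mzero:
  fixes p :: "nat \<Rightarrow> 'n::{finite,linorder} \<Rightarrow> 'n \<Rightarrow> 'n \<Rightarrow> 'n mon \<Rightarrow> 'k::idom"
  assumes "\<And>d l i j m. p d l i j m = - p d l j i m" and "(2::'k) \<noteq> 0" and "is_poly P"
  shows "etilde p P mzero t = of_nat (fact (mdeg t)) * P t"
proof -
  have fin: "finite {a. P a \<noteq> 0}" using assms(3) by (simp add: is_poly_def)
  have "etilde p P mzero t = (\<Sum>a\<in>{a. P a \<noteq> 0}. if a = t then P a * of_nat (fact (mdeg a)) else 0)"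
    unfolding etilde_eq_sum[OF fin order.refl]
    by (intro sum.cong refl)
       (auto simp: esym_mzero[OF assms(1,2)] mono_of_def count_list_mon_list
         simp flip: mdeg_count_list)
  also have "\<dots> = of_nat (fact (mdeg t)) * P t"
    using fin by (simp add: mult.commute)
  finally show ?thesis .
qed

lemma of_nat_fact_neq_0: "CHAR('k::semiring_1_cancel) = 0 \<Longrightarrow> (of_nat (fact n) :: 'k) \<noteq> 0"
  by (simp add: of_nat_eq_0_iff_char_dvd)

lemma inj_on_etilde:
  fixes p :: "nat \<Rightarrow> 'n::{finite,linorder} \<Rightarrow> 'n \<Rightarrow> 'n \<Rightarrow> 'n mon \<Rightarrow> 'k::idom"
  assumes "\<And>d l i j m. p d l i j m = - p d l j i m" and "(2::'k) \<noteq> 0" and "CHAR('k) = 0"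
  shows "inj_on (etilde p) {P. is_poly P}"
proof (rule inj_onI, rule ext)
  fix P Q t assume P: "P \<in> {P. is_poly P}" and Q: "Q \<in> {P. is_poly P}" and eq: "etilde p P = etilde p Q"
  have "of_nat (fact (mdeg t)) * P t = etilde p P mzero t"
    using P by (simp add: etilde_mzero[OF assms(1,2)])
  also have "\<dots> = etilde p Q mzero t"
    by (simp add: eq)
  also have "\<dots> = of_nat (fact (mdeg t)) * Q t"
    using Q by (simp add: etilde_mzero[OF assms(1,2)])
  finally have "of_nat (fact (mdeg t)) * P t = of_nat (fact (mdeg t)) * Q t" .
  then show "P t = Q t"
    using of_nat_fact_neq_0[OF assms(3)] by simp
qed

lemma not_inj_on_etilde:
  fixes p :: "nat \<Rightarrow> 'n::{finite,linorder} \<Rightarrow> 'n \<Rightarrow> 'n \<Rightarrow> 'n mon \<Rightarrow> 'k::comm_ring_1"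
  assumes "CHAR('k) \<noteq> 0"
  shows "\<not> inj_on (etilde p) {P. is_poly P}"
proof
  assume inj: "inj_on (etilde p) {P. is_poly P}"
  define xs where "xs = replicate CHAR('k) (undefined :: 'n)"
  have "etilde p (mono_of xs) = esym (Xgen p) xs"
    by (simp add: xs_def etilde_mono_of)
  also have "\<dots> = wscale (of_nat (fact CHAR('k))) (wprod (replicate CHAR('k) (Xgen p undefined)))"
    unfolding xs_def by (rule esym_replicate)
  also have "(of_nat (fact CHAR('k)) :: 'k) = 0"
    using assms by (simp add: of_nat_eq_0_iff_char_dvd dvd_fact)
  also have "wscale 0 (wprod (replicate CHAR('k) (Xgen p undefined))) = etilde p (\<lambda>_. 0)"
    by (simp add: wscale_def etilde_def wsum_def)
  finally have "(mono_of xs :: 'n mon \<Rightarrow> 'k) = (\<lambda>_. 0)"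
    by (rule inj_onD[OF inj]) (simp_all add: is_poly_mono_of is_poly_zero)
  then show False
    by (metis mono_of_def zero_neq_one)
qed

lemma etilde_linear_independent:
  fixes p :: "nat \<Rightarrow> 'n::{finite,linorder} \<Rightarrow> 'n \<Rightarrow> 'n \<Rightarrow> 'n mon \<Rightarrow> 'k::idom"
  assumes "\<And>d l i j m. p d l i j m = - p d l j i m" and "(2::'k) \<noteq> 0" and "CHAR('k) = 0"
    and "finite S" and "\<forall>xs\<in>S. sorted xs"
    and "wsum (\<lambda>xs. wscale (c xs) (etilde p (mono_of xs))) S = wzero"
    and "xs\<^sub>0 \<in> S"
  shows "c xs\<^sub>0 = 0"
proof -
  have "0 = wsum (\<lambda>xs. wscale (c xs) (etilde p (mono_of xs))) S mzero (count_list xs\<^sub>0)"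
    using assms(6) by (simp add: wzero_def)
  also have "\<dots> = (\<Sum>xs\<in>S. c xs * (of_nat (fact (length xs)) * mono_of xs (count_list xs\<^sub>0)))"
    unfolding wsum_def wscale_def
    using assms(5) by (intro sum.cong refl) (simp add: etilde_mono_of esym_mzero[OF assms(1,2)])
  also have "\<dots> = (\<Sum>xs\<in>S. if xs = xs\<^sub>0 then c xs * of_nat (fact (length xs)) else 0)"
    using assms(5,7) sorted_eq_if_count_list_eq[of xs\<^sub>0]
    by (intro sum.cong refl) (auto simp: mono_of_def)
  also have "\<dots> = c xs\<^sub>0 * of_nat (fact (length xs\<^sub>0))"
    using assms(4,7) by simp
  finally show ?thesis
    using of_nat_fact_neq_0[OF assms(3)] by simp
qed

definition enorm :: "(nat \<Rightarrow> 'n \<Rightarrow> 'n \<Rightarrow> 'n \<Rightarrow> 'n mon \<Rightarrow> 'k::field) \<Rightarrow> ('n::{finite,linorder} mon \<Rightarrow> 'k) \<Rightarrow> ('n mon \<Rightarrow> 'n mon \<Rightarrow> 'k)" where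
  "enorm p P = etilde p (\<lambda>a. inverse (of_nat (fact (mdeg a))) * P a)"

lemma is_poly_inverse_fact_mult:
  "is_poly P \<Longrightarrow> is_poly (\<lambda>a. inverse (of_nat (fact (mdeg a))) * P a :: 'k::field)"
  unfolding is_poly_def by (rule finite_subset[rotated]) auto

lemma lin_map_enorm:
  fixes p :: "nat \<Rightarrow> 'n::{finite,linorder} \<Rightarrow> 'n \<Rightarrow> 'n \<Rightarrow> 'n mon \<Rightarrow> 'k::field"
  shows "lin_map (enorm p)"
proof -
  let ?s = "\<lambda>a. inverse (of_nat (fact (mdeg a))) :: 'k"
  have add: "etilde p (\<lambda>a. P a + Q a) = wadd (etilde p P) (etilde p Q)"
    and scale: "etilde p (\<lambda>a. c * P a) = wscale c (etilde p P)"
    if "is_poly P" "is_poly Q" for P Q :: "'n mon \<Rightarrow> 'k" and c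
    using lin_map_etilde[of p] that unfolding lin_map_def by blast+
  show ?thesis
    unfolding lin_map_def
  proof (intro conjI allI impI)
    fix P Q :: "'n mon \<Rightarrow> 'k" assume "is_poly P" "is_poly Q"
    then show "enorm p (\<lambda>a. P a + Q a) = wadd (enorm p P) (enorm p Q)"
      using add[of "\<lambda>a. ?s a * P a" "\<lambda>a. ?s a * Q a"]
      by (simp add: enorm_def distrib_left is_poly_inverse_fact_mult)
  next
    fix c and P :: "'n mon \<Rightarrow> 'k" assume "is_poly P"
    then show "enorm p (\<lambda>a. c * P a) = wscale c (enorm p P)"
      using scale[of "\<lambda>a. ?s a * P a" "\<lambda>a. ?s a * P a" c]
      by (simp add: enorm_def mult.left_commute is_poly_inverse_fact_mult)
  qed
qed

lemma is_weyl_enorm: "is_poly P \<Longrightarrow> is_weyl (enorm p P)"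
  unfolding enorm_def by (intro is_weyl_etilde is_poly_inverse_fact_mult)

lemma enorm_mono_of:
  fixes p :: "nat \<Rightarrow> 'n::{finite,linorder} \<Rightarrow> 'n \<Rightarrow> 'n \<Rightarrow> 'n mon \<Rightarrow> 'k::field"
  assumes "sorted xs"
  shows "enorm p (mono_of xs) = wscale (inverse (of_nat (fact (length xs)))) (esym (Xgen p) xs)"
proof -
  have "(\<lambda>a. inverse (of_nat (fact (mdeg a))) * mono_of xs a)
      = (\<lambda>a. inverse (of_nat (fact (length xs))) * (mono_of xs a :: 'k))"
    by (auto simp: mono_of_def mdeg_count_list)
  then have "enorm p (mono_of xs) = etilde p (\<lambda>a. inverse (of_nat (fact (length xs))) * mono_of xs a)"
    by (simp add: enorm_def)
  also have "\<dots> = wscale (inverse (of_nat (fact (length xs)))) (etilde p (mono_of xs))"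
    using lin_map_etilde[of p] is_poly_mono_of[of xs] unfolding lin_map_def by blast
  finally show ?thesis
    using assms by (simp add: etilde_mono_of)
qed

lemma inj_on_enorm:
  fixes p :: "nat \<Rightarrow> 'n::{finite,linorder} \<Rightarrow> 'n \<Rightarrow> 'n \<Rightarrow> 'n mon \<Rightarrow> 'k::field"
  assumes "\<And>d l i j m. p d l i j m = - p d l j i m" and "(2::'k) \<noteq> 0" and "CHAR('k) = 0"
  shows "inj_on (enorm p) {P. is_poly P}"
proof (rule inj_onI)
  fix P Q assume "P \<in> {P. is_poly P}" "Q \<in> {P. is_poly P}" "enorm p P = enorm p Q"
  then have "(\<lambda>a. inverse (of_nat (fact (mdeg a))) * P a) = (\<lambda>a. inverse (of_nat (fact (mdeg a))) * Q a)"
    using inj_onD[OF inj_on_etilde[where p = p, OF assms]] is_poly_inverse_fact_mult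
    by (auto simp: enorm_def)
  then show "P = Q"
    using of_nat_fact_neq_0[OF assms(3)] by (auto simp: fun_eq_iff)
qed

lemma two_eq_zero_iff_CHAR_eq_2: "(2::'a::idom) = 0 \<longleftrightarrow> CHAR('a) = 2"
proof -
  have "(2::'a) = 0 \<longleftrightarrow> CHAR('a) dvd 2"
    using of_nat_eq_0_iff_char_dvd[of 2, where 'a = 'a] by simp
  also have "\<dots> \<longleftrightarrow> CHAR('a) = 2"
  proof
    assume dvd: "CHAR('a) dvd 2"
    have "CHAR('a) \<noteq> 0"
    proof
      assume "CHAR('a) = 0"
      with dvd show False by simp
    qed
    moreover have "CHAR('a) \<le> 2"
      using dvd by (rule dvd_imp_le) simp
    ultimately show "CHAR('a) = 2"
      using CHAR_not_1'[where 'a = 'a] by linarith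
  qed simp
  finally show ?thesis .
qed

text \<open>The homogeneity of the \<open>p\<^sup>N\<^sup>-\<^sup>1\<^sup>,\<^sup>l\<^sub>i\<^sub>j\<close> is only needed to make \<open>Xgen\<close> a faithful
  encoding of the formal series; the proof uses antisymmetry alone.\<close>

theorem corollary2p2:
  fixes p :: "nat \<Rightarrow> 'n::{finite,linorder} \<Rightarrow> 'n \<Rightarrow> 'n \<Rightarrow> 'n mon \<Rightarrow> 'k::field"
  assumes char_ne_2: "CHAR('k) \<noteq> 2"
    and homog: "\<And>d l i j m. p d l i j m \<noteq> 0 \<Longrightarrow> mdeg m = d"
    and antisym: "\<And>d l i j m. p d l i j m = - p d l j i m"
  shows
    "(\<exists>E. lin_map E
        \<and> (\<forall>P. is_poly P \<longrightarrow> is_weyl (E P))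
        \<and> (\<forall>xs. sorted xs \<longrightarrow> E (mono_of xs) = esym (Xgen p) xs)
        \<and> (\<forall>k P. is_poly P \<longrightarrow> (\<forall>a. P a \<noteq> 0 \<longrightarrow> mdeg a = k) \<longrightarrow>
               fock (E P) vac = (\<lambda>a. of_nat (fact k) * P a))
        \<and> (inj_on E {P. is_poly P} \<longleftrightarrow> CHAR('k) = 0)
        \<and> (CHAR('k) = 0 \<longrightarrow>
             (\<forall>S c. finite S \<longrightarrow> (\<forall>xs\<in>S. sorted xs) \<longrightarrow>
                wsum (\<lambda>xs. wscale (c xs) (E (mono_of xs))) S = wzero \<longrightarrow>
                (\<forall>xs\<in>S. c xs = 0))))
     \<and> (CHAR('k) = 0 \<longrightarrow>
          (\<exists>e. lin_map e
             \<and> (\<forall>P. is_poly P \<longrightarrow> is_weyl (e P))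
             \<and> (\<forall>xs. sorted xs \<longrightarrow>
                  e (mono_of xs) = wscale (inverse (of_nat (fact (length xs)))) (esym (Xgen p) xs))
             \<and> inj_on e {P. is_poly P}))"
proof -
  have two: "(2::'k) \<noteq> 0"
    using char_ne_2 two_eq_zero_iff_CHAR_eq_2 by blast
  have fock_etilde: "fock (etilde p P) vac = (\<lambda>a. of_nat (fact k) * P a)"
    if "is_poly P" and "\<forall>a. P a \<noteq> 0 \<longrightarrow> mdeg a = k" for k P
  proof
    fix a
    show "fock (etilde p P) vac a = of_nat (fact k) * P a"
      using that by (cases "P a = 0") (simp_all add: fock_vac etilde_mzero[where p = p, OF antisym two])
  qed
  have inj_etilde: "inj_on (etilde p) {P. is_poly P} \<longleftrightarrow> CHAR('k) = 0"
    using inj_on_etilde[where p = p, OF antisym two] not_inj_on_etilde[of p] by blast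
  show ?thesis
  proof (rule conjI[OF exI[of _ "etilde p"] impI[OF exI[of _ "enorm p"]]], intro conjI allI impI ballI)
  qed (use lin_map_etilde is_weyl_etilde etilde_mono_of fock_etilde inj_etilde
         etilde_linear_independent[where p = p, OF antisym two]
         lin_map_enorm is_weyl_enorm enorm_mono_of inj_on_enorm[where p = p, OF antisym two]
       in auto)
qed

end
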